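(* Let $G$ and $\ell$ be as in the construction described in the context. If for some $q\in[t]$ the instance $(X,\mathcal{S}_q)$ of \textsc{Exact-3-Cover} is a Yes-instance, then $G$ has an acyclic matching of size $\ell$.
   Context: Construction. Let $n=3c$ with $c\in\mathbb{N}$, $X=[n]$, and let $(X,\mathcal{S}_1),\dots,(X,\mathcal{S}_t)$ be instances of \textsc{Exact-3-Cover} (each $\mathcal{S}_i$ a collection of 3-element subsets of $X$, all $\mathcal{S}_i$ of the same size $m$ and pairwise distinct as collections). An instance $(X,\mathcal{S})$ is a Yes-instance if some subcollection of $\mathcal{S}$ covers every element of $X$ exactly once. Let $\mathcal{C}=\bigcup_{i\in[t]}\mathcal{S}_i=\{s_1,\dots,s_{|\mathcal{C}|}\}$ (distinct 3-sets). The graph $G$: a vertex set $X'=\{v_a:a\in X\}$; for each $s_j=\{a,b,c\}\in\mathcal{C}$ a set gadget $Q_j$ with vertices $u_{ja},u_{jb},u_{jc}$ (interface vertices), $u_j,w_j,u_j',w_j'$, where each of $u_j,w_j$ is adjacent to each of $u_{ja},u_{jb},u_{jc}$, and additionally $u_jw_j,u_ju_j',w_jw_j'$ are edges; for each $s_j\in\mathcal{C}$ and $d\in s_j$ the edge $u_{jd}v_d$ (cross edges); a vertex $p$ and vertices $P=\{p_1,\dots,p_t\}$ with edges $pp_i$ for all $i$; and for each $i\in[t]$ and each $s_j\in\mathcal{C}\setminus\mathcal{S}_i$, edges from $p_i$ to the three interface vertices of $Q_j$. There are no other edges. Set $\ell=2|\mathcal{C}|+\frac{2n}{3}+1$. A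 matching $M$ is acyclic if the subgraph induced by the endpoints of its edges is a forest. *)

theory Defs
  imports Main
begin

definition x3c_yes :: "nat set \<Rightarrow> nat set set \<Rightarrow> bool" where
  "x3c_yes X S \<longleftrightarrow> (\<exists>T \<subseteq> S. \<forall>a\<in>X. \<exists>!s. s \<in> T \<and> a \<in> s)"

section \<open>Simple graphs given by edge sets (edges are 2-element sets)\<close>

definition is_matching :: "'v set set \<Rightarrow> 'v set set \<Rightarrow> bool" where
  "is_matching E M \<longleftrightarrow> M \<subseteq> E \<and> (\<forall>e1\<in>M. \<forall>e2\<in>M. e1 \<noteq> e2 \<longrightarrow> e1 \<inter> e2 = {})"

definition induced_cycle :: "'v set set \<Rightarrow> 'v set \<Rightarrow> 'v list \<Rightarrow> bool" where
  "induced_cycle E V vs \<longleftrightarrow> length vs \<ge> 3 \<and> distinct vs \<and> set vs \<subseteq> V \<and>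
     (\<forall>i < length vs. {vs ! i, vs ! ((i + 1) mod length vs)} \<in> E)"

definition induced_forest :: "'v set set \<Rightarrow> 'v set \<Rightarrow> bool" where
  "induced_forest E V \<longleftrightarrow> \<not> (\<exists>vs. induced_cycle E V vs)"

definition acyclic_matching :: "'v set set \<Rightarrow> 'v set set \<Rightarrow> bool" where
  "acyclic_matching E M \<longleftrightarrow> is_matching E M \<and> induced_forest E (\<Union>M)"

datatype vtx =
    VX nat                 (* v_a, a \<in> X *)
  | UI "nat set" nat       (* u_{j a}: interface vertex of the gadget of set s_j for a \<in> s_j *)
  | U "nat set"            (* u_j *)
  | W "nat set"            (* w_j *)
  | U' "nat set"           (* u_j' *)
  | W' "nat set"           (* w_j' *)
  | Pv                     (* p *)
  | PI nat                 (* p_i *)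

text \<open>Gadgets are indexed by the 3-sets of C themselves (an enumeration s_1,...,s_|C| is immaterial).\<close>
definition coll_union :: "nat \<Rightarrow> (nat \<Rightarrow> nat set set) \<Rightarrow> nat set set" where
  "coll_union t S = (\<Union>i\<in>{1..t}. S i)"

definition red_edges :: "nat \<Rightarrow> (nat \<Rightarrow> nat set set) \<Rightarrow> vtx set set" where
  "red_edges t S =
     (let C = coll_union t S in
        {{U s, UI s a} | s a. s \<in> C \<and> a \<in> s}
      \<union> {{W s, UI s a} | s a. s \<in> C \<and> a \<in> s}
      \<union> {{U s, W s} | s. s \<in> C}
      \<union> {{U s, U' s} | s. s \<in> C}
      \<union> {{W s, W' s} | s. s \<in> C}
      \<union> {{UI s a, VX a} | s a. s \<in> C \<and> a \<in> s}
      \<union> {{Pv, PI i} | i. i \<in> {1..t}}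
      \<union> {{PI i, UI s a} | i s a. i \<in> {1..t} \<and> s \<in> C \<and> s \<notin> S i \<and> a \<in> s})"

definition red_ell :: "nat \<Rightarrow> nat \<Rightarrow> (nat \<Rightarrow> nat set set) \<Rightarrow> nat" where
  "red_ell c t S = 2 * card (coll_union t S) + 2 * (3 * c) div 3 + 1"

end

theory Submission
  imports Defs
begin

text \<open>Let f map each element a of X to the set of the exact cover of S_q containing it. Take all
  edges u_j u_j', the edges w_j w_j' of the sets not in the cover, the cross edges u_{f(a) a} v_a and
  the edge p p_q: that is |C| + (|C| - n/3) + n + 1 = \<ell> disjoint edges. Rank the saturated
  vertices by 0 for p and u_j, 2 for v_a and w_j', and 1 otherwise. Adjacent saturated vertices
  have different ranks (p_q sees no interface vertex of a cover set, as these sets lie in S_q), and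
  each saturated vertex has at most one lower-ranked saturated neighbour, so a vertex of maximal
  rank on a cycle cannot exist.\<close>

lemma cyclic_neighbour_indices:
  fixes i n :: nat
  assumes "3 \<le> n" "i < n"
  shows "(i + 1) mod n \<noteq> i" "(i + n - 1) mod n \<noteq> i" "(i + 1) mod n \<noteq> (i + n - 1) mod n"
    and "((i + n - 1) mod n + 1) mod n = i"
proof -
  have pred: "(i + n - 1) mod n = (if i = 0 then n - 1 else i - 1)"
    using assms by (auto simp: le_mod_geq)
  have succ: "(i + 1) mod n = (if i + 1 = n then 0 else i + 1)"
    using assms by auto
  show "(i + 1) mod n \<noteq> i" "(i + n - 1) mod n \<noteq> i" "(i + 1) mod n \<noteq> (i + n - 1) mod n"
    "((i + n - 1) mod n + 1) mod n = i"
    unfolding pred succ using assms by auto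
qed

lemma induced_cycle_two_neighbours:
  assumes cycle: "induced_cycle E V vs" and x: "x \<in> set vs"
  obtains y z where "y \<in> set vs" "z \<in> set vs" "y \<noteq> z" "y \<noteq> x" "z \<noteq> x"
    "{x, y} \<in> E" "{x, z} \<in> E"
proof -
  let ?n = "length vs"
  have n: "3 \<le> ?n" and dist: "distinct vs"
    and edge: "\<And>i. i < ?n \<Longrightarrow> {vs ! i, vs ! ((i + 1) mod ?n)} \<in> E"
    using cycle unfolding induced_cycle_def by auto
  obtain i where i: "i < ?n" "vs ! i = x" using x by (auto simp: in_set_conv_nth)
  define j k where "j = (i + 1) mod ?n" and "k = (i + ?n - 1) mod ?n"
  have jk: "j < ?n" "k < ?n" using n by (auto simp: j_def k_def intro!: mod_less_divisor)
  note idx = cyclic_neighbour_indices[OF n i(1), folded j_def k_def]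
  show thesis
  proof
    show "vs ! j \<in> set vs" "vs ! k \<in> set vs" using jk by auto
    show "vs ! j \<noteq> vs ! k" "vs ! j \<noteq> x" "vs ! k \<noteq> x"
      using idx jk i dist by (auto simp: nth_eq_iff_index_eq)
    show "{x, vs ! j} \<in> E" using edge[OF i(1)] i(2) j_def by simp
    show "{x, vs ! k} \<in> E" using edge[OF jk(2)] idx(4) i(2) by (simp add: insert_commute)
  qed
qed

lemma induced_forest_by_rank:
  fixes rank :: "'v \<Rightarrow> nat" and parent :: "'v \<Rightarrow> 'v"
  assumes rank_neq: "\<And>x y. x \<in> V \<Longrightarrow> y \<in> V \<Longrightarrow> x \<noteq> y \<Longrightarrow> {x, y} \<in> E \<Longrightarrow> rank x \<noteq> rank y"
    and lower_parent: "\<And>x y. x \<in> V \<Longrightarrow> y \<in> V \<Longrightarrow> {x, y} \<in> E \<Longrightarrow> rank y < rank x \<Longrightarrow> y = parent x"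
  shows "induced_forest E V"
  unfolding induced_forest_def
proof
  assume "\<exists>vs. induced_cycle E V vs"
  then obtain vs where cycle: "induced_cycle E V vs" ..
  then have sub: "set vs \<subseteq> V" and ne: "set vs \<noteq> {}"
    unfolding induced_cycle_def by auto
  have "Max (rank ` set vs) \<in> rank ` set vs" using ne by simp
  then obtain x where x: "x \<in> set vs" and x_max: "rank x = Max (rank ` set vs)" by auto
  have max: "\<And>y. y \<in> set vs \<Longrightarrow> rank y \<le> rank x" unfolding x_max by simp
  obtain y z where yz: "y \<in> set vs" "z \<in> set vs" "y \<noteq> z" "y \<noteq> x" "z \<noteq> x"
    and edges: "{x, y} \<in> E" "{x, z} \<in> E"
    using induced_cycle_two_neighbours[OF cycle x] by blast
  have in_V: "x \<in> V" "y \<in> V" "z \<in> V" using x yz sub by auto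
  have "rank y < rank x" "rank z < rank x"
    using rank_neq[OF in_V(1,2)] rank_neq[OF in_V(1,3)] max[OF yz(1)] max[OF yz(2)] yz edges
    by (auto intro!: le_neq_implies_less)
  then have "y = parent x" "z = parent x"
    using lower_parent in_V edges by auto
  with \<open>y \<noteq> z\<close> show False by simp
qed

lemma x3c_yes_cover_function:
  assumes "x3c_yes X S" and "\<And>s. s \<in> S \<Longrightarrow> s \<subseteq> X"
  obtains f where "\<And>a. a \<in> X \<Longrightarrow> f a \<in> S" "\<And>a. a \<in> X \<Longrightarrow> a \<in> f a"
    "\<And>a b. a \<in> X \<Longrightarrow> b \<in> f a \<Longrightarrow> f b = f a"
proof -
  obtain T where "T \<subseteq> S" and unique: "\<forall>a\<in>X. \<exists>!s. s \<in> T \<and> a \<in> s"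
    using assms(1) unfolding x3c_yes_def by blast
  define f where "f a = (THE s. s \<in> T \<and> a \<in> s)" for a
  have f: "f a \<in> T \<and> a \<in> f a" if "a \<in> X" for a
  proof -
    have "\<exists>!s. s \<in> T \<and> a \<in> s" using unique that by blast
    then show ?thesis unfolding f_def by (rule theI')
  qed
  show thesis
  proof
    show "f a \<in> S" "a \<in> f a" if "a \<in> X" for a using f[OF that] \<open>T \<subseteq> S\<close> by auto
    show "f b = f a" if "a \<in> X" "b \<in> f a" for a b
    proof -
      have "b \<in> X" using f[OF that(1)] that(2) \<open>T \<subseteq> S\<close> assms(2) by blast
      then have "\<exists>!s. s \<in> T \<and> b \<in> s" using unique by blast
      then show ?thesis using f[OF that(1)] f[OF \<open>b \<in> X\<close>] that(2) by blast
    qed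
  qed
qed

lemma card_eq_mult_card_blocks:
  assumes "finite X"
    and blocks: "\<And>a. a \<in> X \<Longrightarrow> a \<in> f a \<and> f a \<subseteq> X \<and> card (f a) = k"
    and same_block: "\<And>a b. a \<in> X \<Longrightarrow> b \<in> f a \<Longrightarrow> f b = f a"
  shows "card X = k * card (f ` X)"
proof -
  have "\<Union>(f ` X) = X" using blocks by blast
  moreover have "k * card (f ` X) = card (\<Union>(f ` X))"
  proof (rule card_partition)
    show "finite (\<Union>(f ` X))" using \<open>finite X\<close> blocks by (blast intro: finite_subset)
    show "c1 \<inter> c2 = {}" if "c1 \<in> f ` X" "c2 \<in> f ` X" "c1 \<noteq> c2" for c1 c2
      using that same_block by (metis (no_types, lifting) disjoint_iff imageE)
  qed (use \<open>finite X\<close> blocks in auto)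
  ultimately show ?thesis by simp
qed

fun red_arc :: "nat set set \<Rightarrow> nat \<Rightarrow> (nat \<Rightarrow> nat set set) \<Rightarrow> vtx \<Rightarrow> vtx \<Rightarrow> bool" where
  "red_arc C t S (U s) (UI s' a) = (s' = s \<and> s \<in> C \<and> a \<in> s)"
| "red_arc C t S (W s) (UI s' a) = (s' = s \<and> s \<in> C \<and> a \<in> s)"
| "red_arc C t S (U s) (W s') = (s' = s \<and> s \<in> C)"
| "red_arc C t S (U s) (U' s') = (s' = s \<and> s \<in> C)"
| "red_arc C t S (W s) (W' s') = (s' = s \<and> s \<in> C)"
| "red_arc C t S (UI s a) (VX b) = (b = a \<and> s \<in> C \<and> a \<in> s)"
| "red_arc C t S Pv (PI i) = (i \<in> {1..t})"
| "red_arc C t S (PI i) (UI s a) = (i \<in> {1..t} \<and> s \<in> C \<and> s \<notin> S i \<and> a \<in> s)"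
| "red_arc C t S _ _ = False"

lemma red_edges_arc:
  assumes "{x, y} \<in> red_edges t S"
  shows "red_arc (coll_union t S) t S x y \<or> red_arc (coll_union t S) t S y x"
  using assms unfolding red_edges_def Let_def by (auto simp: doubleton_eq_iff)

fun red_rank :: "vtx \<Rightarrow> nat" where
  "red_rank (VX _) = 2" | "red_rank (UI _ _) = 1" | "red_rank (U _) = 0" | "red_rank (W _) = 1"
| "red_rank (U' _) = 1" | "red_rank (W' _) = 2" | "red_rank Pv = 0" | "red_rank (PI _) = 1"

fun red_parent :: "(nat \<Rightarrow> nat set) \<Rightarrow> vtx \<Rightarrow> vtx" where
  "red_parent f (VX a) = UI (f a) a"
| "red_parent f (UI s _) = U s"
| "red_parent f (W s) = U s"
| "red_parent f (U' s) = U s"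
| "red_parent f (W' s) = W s"
| "red_parent f (PI _) = Pv"
| "red_parent f v = v"

definition red_matching :: "nat set set \<Rightarrow> (nat \<Rightarrow> nat set) \<Rightarrow> nat set \<Rightarrow> nat \<Rightarrow> vtx set set" where
  "red_matching C f X q =
     (\<lambda>s. {U s, U' s}) ` C \<union> (\<lambda>s. {W s, W' s}) ` (C - f ` X)
   \<union> (\<lambda>a. {UI (f a) a, VX a}) ` X \<union> {{Pv, PI q}}"

lemma in_Union_red_matching:
  assumes "x \<in> \<Union>(red_matching C f X q)"
  shows "case x of VX a \<Rightarrow> a \<in> X | UI s a \<Rightarrow> a \<in> X \<and> s = f a
    | W s \<Rightarrow> s \<notin> f ` X | W' s \<Rightarrow> s \<notin> f ` X | PI i \<Rightarrow> i = q | _ \<Rightarrow> True"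
  using assms unfolding red_matching_def by auto

lemma is_matching_red_matching:
  assumes "q \<in> {1..t}" "\<And>a. a \<in> X \<Longrightarrow> f a \<in> S q" "\<And>a. a \<in> X \<Longrightarrow> a \<in> f a"
  shows "is_matching (red_edges t S) (red_matching (coll_union t S) f X q)"
proof -
  have "f a \<in> coll_union t S" if "a \<in> X" for a
    using assms that unfolding coll_union_def by blast
  then show ?thesis
    using assms unfolding is_matching_def red_matching_def red_edges_def Let_def
    by (auto simp: doubleton_eq_iff)
qed

lemma induced_forest_red_matching:
  assumes "\<And>a. a \<in> X \<Longrightarrow> f a \<in> S q"
  shows "induced_forest (red_edges t S) (\<Union>(red_matching (coll_union t S) f X q))"
proof (rule induced_forest_by_rank[where rank = red_rank and parent = "red_parent f"])
  fix x y
  assume "x \<in> \<Union>(red_matching (coll_union t S) f X q)" "y \<in> \<Union>(red_matching (coll_union t S) f X q)"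
    and edge: "{x, y} \<in> red_edges t S"
  note xy = in_Union_red_matching[OF this(1)] in_Union_red_matching[OF this(2)]
    red_edges_arc[OF edge]
  show "x \<noteq> y \<Longrightarrow> red_rank x \<noteq> red_rank y"
    using xy assms by (cases x; cases y) auto
  show "red_rank y < red_rank x \<Longrightarrow> y = red_parent f x"
    using xy by (cases x; cases y) auto
qed

lemma card_red_matching:
  assumes "finite C" "finite X" "f ` X \<subseteq> C"
  shows "card (red_matching C f X q) = card C + (card C - card (f ` X)) + card X + 1"
proof -
  let ?A = "(\<lambda>s. {U s, U' s}) ` C" and ?B = "(\<lambda>s. {W s, W' s}) ` (C - f ` X)"
    and ?D = "(\<lambda>a. {UI (f a) a, VX a}) ` X"
  have "card ?A = card C" by (rule card_image) (auto simp: inj_on_def doubleton_eq_iff)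
  moreover have "card ?B = card C - card (f ` X)"
    using assms by (subst card_image) (auto simp: inj_on_def doubleton_eq_iff card_Diff_subset)
  moreover have "card ?D = card X" by (rule card_image) (auto simp: inj_on_def doubleton_eq_iff)
  moreover have "card (?A \<union> ?B \<union> ?D \<union> {{Pv, PI q}}) = card ?A + card ?B + card ?D + 1"
  proof -
    have "?A \<inter> ?B = {}" "(?A \<union> ?B) \<inter> ?D = {}" "{Pv, PI q} \<notin> ?A \<union> ?B \<union> ?D"
      by (auto simp: doubleton_eq_iff)
    then show ?thesis using assms by (simp add: card_Un_disjoint)
  qed
  ultimately show ?thesis unfolding red_matching_def by simp
qed

theorem lemma14:
  fixes c t m q :: nat and S :: "nat \<Rightarrow> nat set set"
  assumes sets3: "\<And>i. i \<in> {1..t} \<Longrightarrow> S i \<subseteq> {s. s \<subseteq> {1..3 * c} \<and> card s = 3}"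
    and same_size: "\<And>i. i \<in> {1..t} \<Longrightarrow> card (S i) = m"
    and distinct_inst: "inj_on S {1..t}"
    and q: "q \<in> {1..t}"
    and yes: "x3c_yes {1..3 * c} (S q)"
  shows "\<exists>M. acyclic_matching (red_edges t S) M \<and> card M = red_ell c t S"
proof -
  define C X where "C = coll_union t S" and "X = {1..3 * c}"
  have C_sets: "\<And>s. s \<in> C \<Longrightarrow> s \<subseteq> X \<and> card s = 3"
    using sets3 unfolding C_def coll_union_def X_def by blast
  obtain f where f: "\<And>a. a \<in> X \<Longrightarrow> f a \<in> S q" "\<And>a. a \<in> X \<Longrightarrow> a \<in> f a"
    and same_block: "\<And>a b. a \<in> X \<Longrightarrow> b \<in> f a \<Longrightarrow> f b = f a"
    using x3c_yes_cover_function[OF yes] sets3[OF q] unfolding X_def by blast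
  have f_C: "f ` X \<subseteq> C" using f(1) q unfolding C_def coll_union_def by blast
  have "C \<subseteq> Pow X" using C_sets by blast
  then have "finite C" unfolding X_def by (rule finite_subset) simp
  have "card X = 3 * card (f ` X)"
  proof (rule card_eq_mult_card_blocks)
    show "finite X" unfolding X_def by simp
    show "a \<in> f a \<and> f a \<subseteq> X \<and> card (f a) = 3" if "a \<in> X" for a
      using f(2)[OF that] f_C C_sets that by blast
  qed (rule same_block)
  then have "card (f ` X) = c" by (simp add: X_def)
  moreover have "card (f ` X) \<le> card C" using f_C \<open>finite C\<close> by (rule card_mono[rotated])
  ultimately have "card (red_matching C f X q) = red_ell c t S"
    using card_red_matching[OF \<open>finite C\<close> _ f_C] unfolding red_ell_def C_def[symmetric] X_def
    by simp
  moreover have "acyclic_matching (red_edges t S) (red_matching C f X q)"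
    unfolding acyclic_matching_def C_def
    using is_matching_red_matching[of q t X f S] induced_forest_red_matching[of X f S q t] q f
    by blast
  ultimately show ?thesis by blast
qed

end
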